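(* Every tame topological Kuranishi atlas $\mathcal K$ has a reduction.
   Context: Notation: for subsets $V'\subset V$ of a topological space, $V'\sqsubset V$ means the closure of $V'$ in $V$ is compact. $X$ is a compact metrizable space. Charts: a topological Kuranishi chart for $X$ with open footprint $F\subset X$ is a tuple $\mathbf K=(U,\mathbb E,\mathfrak s,\psi)$ where $U$ is a separable, locally compact, metrizable space; $\mathbb E$ is a separable, locally compact, metrizable space with continuous maps $\mathrm{pr}:\mathbb E\to U$ and $0:U\to\mathbb E$ with $\mathrm{pr}\circ0=\mathrm{id}_U$; $\mathfrak s:U\to\mathbb E$ is continuous with $\mathrm{pr}\circ\mathfrak s=\mathrm{id}_U$; and $\psi$ is a homeomorphism from $\mathfrak s^{-1}(0):=\{x\in U:\mathfrak s(x)=0(x)\}$ onto $F$. Coordinate changes: for charts $\mathbf K_I,\mathbf K_J$ with $F_I\cap F_J\neq\emptyset$, a coordinate change $\widehat\Phi_{IJ}:\mathbf K_I\to\mathbf K_J$ consists of an open set $U_{IJ}\subset U_I$ with $U_{IJ}\cap\mathfrak s_I^{-1}(0_I)=\psi_I^{-1}(F_I\cap F_J)$ and a topological embedding $\widehat\Phi_{IJ}:\mathrm{pr}_I^{-1}(U_{IJ})\to\mathbb E_J$ such that there is a topological embedding $\phi_{IJ}:U_{IJ}\to U_J$ with $\mathrm{pr}_J\circ\widehat\Phi_{IJ}=\phi_{IJ}\circ\mathrm{pr}_I$, $0_J\circ\phi_{IJ}=\widehat\Phi_{IJ}\circ0_I$ and $\mathfrak s_J\circ\phi_{IJ}=\widehat\Phi_{IJ}\circ\mathfrak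 s_I$ on $U_{IJ}$, and $\phi_{IJ}=\psi_J^{-1}\circ\psi_I$ on $U_{IJ}\cap\mathfrak s_I^{-1}(0_I)$. Atlases: a covering family of basic charts is a finite family $(\mathbf K_i)_{i=1,\dots,N}$ of charts whose footprints cover $X$; $\mathcal I_{\mathcal K}$ is the set of nonempty $I\subset\{1,\dots,N\}$ with $F_I:=\bigcap_{i\in I}F_i\neq\emptyset$. Transition data consist of a chart $\mathbf K_J$ with footprint $F_J$ for each $J\in\mathcal I_{\mathcal K}$ with $|J|\ge2$ (and $\mathbf K_{\{i\}}:=\mathbf K_i$), and a coordinate change $\widehat\Phi_{IJ}:\mathbf K_I\to\mathbf K_J$ for all $I\subsetneq J$ in $\mathcal I_{\mathcal K}$. We set $U_{II}:=U_I$, $\phi_{II}:=\mathrm{id}_{U_I}$. For $I\subsetneq J\subsetneq K$ let $U_{IJK}:=U_{IJ}\cap\phi_{IJ}^{-1}(U_{JK})$. The triple satisfies the weak cocycle condition if $\widehat\Phi_{JK}\circ\widehat\Phi_{IJ}=\widehat\Phi_{IK}$ on $\mathrm{pr}_I^{-1}(U_{IJK}\cap U_{IK})$; the cocycle condition if in addition $U_{IJK}\subset U_{IK}$; the strong cocycle condition if in addition $U_{IJK}=U_{IK}$. A weak topological Kuranishi atlas $\mathcal K$ is a covering family with transition data satisfying the weak cocycle condition for all such triples; a topological Kuranishi atlas is one satisfying the cocycle condition for all triples. Filtrations: a weak topological Kuranishi atlas is filtered if it is equipped with closed subsets $\mathbb E_{IJ}\subset\mathbb E_J$ for all $J\in\mathcal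 I_{\mathcal K}$ and $I\subset J$ (including $I=\emptyset$) such that (i) $\mathbb E_{JJ}=\mathbb E_J$ and $\mathbb E_{\emptyset J}=\mathrm{im}\,0_J$; (ii) $\widehat\Phi_{JK}(\mathrm{pr}_J^{-1}(U_{JK})\cap\mathbb E_{IJ})=\mathbb E_{IK}\cap\mathrm{pr}_K^{-1}(\mathrm{im}\,\phi_{JK})$ for $I\subset J\subsetneq K$; (iii) $\mathbb E_{IJ}\cap\mathbb E_{HJ}=\mathbb E_{(I\cap H)J}$ for $I,H\subset J$; (iv) $\mathrm{im}\,\phi_{IJ}$ is an open subset of $\mathfrak s_J^{-1}(\mathbb E_{IJ})$ for $I\subsetneq J$. Tameness: a filtered weak topological Kuranishi atlas is tame if $U_{IJ}\cap U_{IK}=U_{I(J\cup K)}$ for all $I,J,K\in\mathcal I_{\mathcal K}$ with $I\subset J,K$ (where $U_{IL}:=\emptyset$ if $L\notin\mathcal I_{\mathcal K}$), and $\phi_{IJ}(U_{IK})=U_{JK}\cap\mathfrak s_J^{-1}(\mathbb E_{IJ})$ for all $I\subset J\subset K$ in $\mathcal I_{\mathcal K}$ (equalities of indices allowed). Virtual neighbourhood: for a topological Kuranishi atlas, $|\mathcal K|$ is the quotient of $\bigsqcup_{I\in\mathcal I_{\mathcal K}}U_I=\{(I,x):x\in U_I\}$ by the equivalence relation generated by $(I,x)\sim(J,\phi_{IJ}(x))$ for $I\subset J$, $x\in U_{IJ}$, with the quotient topology and projection $\pi_{\mathcal K}$; $\iota_{\mathcal K}(X):=\pi_{\mathcal K}\big(\bigsqcup_I\{I\}\times\mathfrak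 s_I^{-1}(0_I)\big)\subset|\mathcal K|$. Reductions: a reduction of a tame topological Kuranishi atlas $\mathcal K$ is a tuple $\mathcal V=\bigsqcup_{I\in\mathcal I_{\mathcal K}}V_I$ of (possibly empty) open subsets $V_I\subset U_I$ such that (i) $V_I\sqsubset U_I$ for all $I$, and $V_I\neq\emptyset$ implies $V_I\cap\mathfrak s_I^{-1}(0_I)\neq\emptyset$; (ii) if $\pi_{\mathcal K}(\overline{V_I})\cap\pi_{\mathcal K}(\overline{V_J})\neq\emptyset$ (closures in $U_I$, $U_J$) then $I\subset J$ or $J\subset I$; (iii) $\iota_{\mathcal K}(X)\subset\pi_{\mathcal K}(\mathcal V)=\bigcup_I\pi_{\mathcal K}(V_I)$. *)

theory Defs
  imports "HOL-Analysis.Analysis"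
begin

text \<open>All domains U of the charts live in one ambient type 'u, all bundles E in one
ambient type 'e; each space is an abstract topology on a subset of that type.\<close>

record ('x, 'u, 'e) kchart =
  cU   :: "'u topology"
  cE   :: "'e topology"
  cpr  :: "'e \<Rightarrow> 'u"
  czero :: "'u \<Rightarrow> 'e"
  cs   :: "'u \<Rightarrow> 'e"
  cpsi :: "'u \<Rightarrow> 'x"
  cF   :: "'x set"

definition zeroset :: "('x, 'u, 'e) kchart \<Rightarrow> 'u set" where
  "zeroset K = {x \<in> topspace (cU K). cs K x = czero K x}"

definition is_kchart :: "'x topology \<Rightarrow> ('x, 'u, 'e) kchart \<Rightarrow> bool" where
  "is_kchart X K \<longleftrightarrow>
     openin X (cF K) \<and>
     separable_space (cU K) \<and> locally_compact_space (cU K) \<and> metrizable_space (cU K) \<and>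
     separable_space (cE K) \<and> locally_compact_space (cE K) \<and> metrizable_space (cE K) \<and>
     continuous_map (cE K) (cU K) (cpr K) \<and>
     continuous_map (cU K) (cE K) (czero K) \<and>
     (\<forall>x \<in> topspace (cU K). cpr K (czero K x) = x) \<and>
     continuous_map (cU K) (cE K) (cs K) \<and>
     (\<forall>x \<in> topspace (cU K). cpr K (cs K x) = x) \<and>
     homeomorphic_map (subtopology (cU K) (zeroset K)) (subtopology X (cF K)) (cpsi K)"

text \<open>Coordinate change from KI to KJ: domain UIJ, bundle map Phi, base map phi.
(The base embedding phi, whose existence is required, is recorded as data.)\<close>

definition is_coord_change ::
  "('x, 'u, 'e) kchart \<Rightarrow> ('x, 'u, 'e) kchart \<Rightarrow> 'u set \<Rightarrow> ('e \<Rightarrow> 'e) \<Rightarrow> ('u \<Rightarrow> 'u) \<Rightarrow> bool" where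
  "is_coord_change KI KJ UIJ Phi phi \<longleftrightarrow>
     openin (cU KI) UIJ \<and>
     UIJ \<inter> zeroset KI = {x \<in> zeroset KI. cpsi KI x \<in> cF KI \<inter> cF KJ} \<and>
     embedding_map (subtopology (cE KI) {e \<in> topspace (cE KI). cpr KI e \<in> UIJ}) (cE KJ) Phi \<and>
     embedding_map (subtopology (cU KI) UIJ) (cU KJ) phi \<and>
     (\<forall>e \<in> topspace (cE KI). cpr KI e \<in> UIJ \<longrightarrow> cpr KJ (Phi e) = phi (cpr KI e)) \<and>
     (\<forall>x \<in> UIJ. czero KJ (phi x) = Phi (czero KI x)) \<and>
     (\<forall>x \<in> UIJ. cs KJ (phi x) = Phi (cs KI x)) \<and>
     (\<forall>x \<in> UIJ \<inter> zeroset KI. phi x = inv_into (zeroset KJ) (cpsi KJ) (cpsi KI x))"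

record ('x, 'u, 'e) katlas =
  aN   :: nat
  aK   :: "nat set \<Rightarrow> ('x, 'u, 'e) kchart"
  aUU  :: "nat set \<Rightarrow> nat set \<Rightarrow> 'u set"
  aPhi :: "nat set \<Rightarrow> nat set \<Rightarrow> 'e \<Rightarrow> 'e"
  aphi :: "nat set \<Rightarrow> nat set \<Rightarrow> 'u \<Rightarrow> 'u"
  aEE  :: "nat set \<Rightarrow> nat set \<Rightarrow> 'e set"

text \<open>Basic chart i is aK A {i}; its footprint is F_i.\<close>

definition Iset :: "('x, 'u, 'e) katlas \<Rightarrow> nat set set" where
  "Iset A = {I. I \<noteq> {} \<and> I \<subseteq> {1..aN A} \<and> (\<Inter>i\<in>I. cF (aK A {i})) \<noteq> {}}"

text \<open>Conventions U_II = U_I, phi_II = id, and U_IL = {} if L is not an index.\<close>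

definition UUx :: "('x, 'u, 'e) katlas \<Rightarrow> nat set \<Rightarrow> nat set \<Rightarrow> 'u set" where
  "UUx A I J = (if J \<notin> Iset A then {} else if I = J then topspace (cU (aK A I)) else aUU A I J)"

definition phix :: "('x, 'u, 'e) katlas \<Rightarrow> nat set \<Rightarrow> nat set \<Rightarrow> 'u \<Rightarrow> 'u" where
  "phix A I J = (if I = J then id else aphi A I J)"

definition UUU :: "('x, 'u, 'e) katlas \<Rightarrow> nat set \<Rightarrow> nat set \<Rightarrow> nat set \<Rightarrow> 'u set" where
  "UUU A I J K = {x \<in> aUU A I J. aphi A I J x \<in> aUU A J K}"

definition transition_data :: "'x topology \<Rightarrow> ('x, 'u, 'e) katlas \<Rightarrow> bool" where
  "transition_data X A \<longleftrightarrow>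
     (\<forall>i \<in> {1..aN A}. is_kchart X (aK A {i})) \<and>
     (\<Union>i\<in>{1..aN A}. cF (aK A {i})) = topspace X \<and>
     (\<forall>J \<in> Iset A. card J \<ge> 2 \<longrightarrow>
         is_kchart X (aK A J) \<and> cF (aK A J) = (\<Inter>i\<in>J. cF (aK A {i}))) \<and>
     (\<forall>I \<in> Iset A. \<forall>J \<in> Iset A. I \<subset> J \<longrightarrow>
         is_coord_change (aK A I) (aK A J) (aUU A I J) (aPhi A I J) (aphi A I J))"

definition weak_cocycle :: "('x, 'u, 'e) katlas \<Rightarrow> bool" where
  "weak_cocycle A \<longleftrightarrow>
     (\<forall>I \<in> Iset A. \<forall>J \<in> Iset A. \<forall>K \<in> Iset A. I \<subset> J \<and> J \<subset> K \<longrightarrow>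
        (\<forall>e \<in> topspace (cE (aK A I)). cpr (aK A I) e \<in> UUU A I J K \<inter> aUU A I K \<longrightarrow>
            aPhi A J K (aPhi A I J e) = aPhi A I K e))"

definition cocycle :: "('x, 'u, 'e) katlas \<Rightarrow> bool" where
  "cocycle A \<longleftrightarrow> weak_cocycle A \<and>
     (\<forall>I \<in> Iset A. \<forall>J \<in> Iset A. \<forall>K \<in> Iset A. I \<subset> J \<and> J \<subset> K \<longrightarrow> UUU A I J K \<subseteq> aUU A I K)"

definition kur_atlas :: "'x topology \<Rightarrow> ('x, 'u, 'e) katlas \<Rightarrow> bool" where
  "kur_atlas X A \<longleftrightarrow> transition_data X A \<and> cocycle A"

definition filtered :: "('x, 'u, 'e) katlas \<Rightarrow> bool" where
  "filtered A \<longleftrightarrow>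
     (\<forall>J \<in> Iset A. \<forall>I. I \<subseteq> J \<longrightarrow> closedin (cE (aK A J)) (aEE A I J)) \<and>
     (\<forall>J \<in> Iset A. aEE A J J = topspace (cE (aK A J)) \<and>
                   aEE A {} J = czero (aK A J) ` topspace (cU (aK A J))) \<and>
     (\<forall>J \<in> Iset A. \<forall>K \<in> Iset A. \<forall>I. I \<subseteq> J \<and> J \<subset> K \<longrightarrow>
        aPhi A J K ` {e \<in> aEE A I J. cpr (aK A J) e \<in> aUU A J K} =
        aEE A I K \<inter> {e \<in> topspace (cE (aK A K)). cpr (aK A K) e \<in> aphi A J K ` aUU A J K}) \<and>
     (\<forall>J \<in> Iset A. \<forall>I H. I \<subseteq> J \<and> H \<subseteq> J \<longrightarrow> aEE A I J \<inter> aEE A H J = aEE A (I \<inter> H) J) \<and>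
     (\<forall>I \<in> Iset A. \<forall>J \<in> Iset A. I \<subset> J \<longrightarrow>
        openin (subtopology (cU (aK A J))
                  {x \<in> topspace (cU (aK A J)). cs (aK A J) x \<in> aEE A I J})
               (aphi A I J ` aUU A I J))"

definition tame :: "('x, 'u, 'e) katlas \<Rightarrow> bool" where
  "tame A \<longleftrightarrow>
     (\<forall>I \<in> Iset A. \<forall>J \<in> Iset A. \<forall>K \<in> Iset A. I \<subseteq> J \<and> I \<subseteq> K \<longrightarrow>
        UUx A I J \<inter> UUx A I K = UUx A I (J \<union> K)) \<and>
     (\<forall>I \<in> Iset A. \<forall>J \<in> Iset A. \<forall>K \<in> Iset A. I \<subseteq> J \<and> J \<subseteq> K \<longrightarrow>
        phix A I J ` UUx A I K =
        UUx A J K \<inter> {x \<in> topspace (cU (aK A J)). cs (aK A J) x \<in> aEE A I J})"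

definition tame_kur_atlas :: "'x topology \<Rightarrow> ('x, 'u, 'e) katlas \<Rightarrow> bool" where
  "tame_kur_atlas X A \<longleftrightarrow> kur_atlas X A \<and> filtered A \<and> tame A"

section \<open>Virtual neighbourhood |K| (as a set of equivalence classes)\<close>

definition kdom :: "('x, 'u, 'e) katlas \<Rightarrow> (nat set \<times> 'u) set" where
  "kdom A = {(I, x). I \<in> Iset A \<and> x \<in> topspace (cU (aK A I))}"

definition kgen :: "('x, 'u, 'e) katlas \<Rightarrow> ((nat set \<times> 'u) \<times> (nat set \<times> 'u)) set" where
  "kgen A = {((I, x), (J, phix A I J x)) | I J x.
               I \<in> Iset A \<and> J \<in> Iset A \<and> I \<subseteq> J \<and> x \<in> UUx A I J}"

definition kequiv :: "('x, 'u, 'e) katlas \<Rightarrow> ((nat set \<times> 'u) \<times> (nat set \<times> 'u)) set" where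
  "kequiv A = (kgen A \<union> (kgen A)\<inverse>)\<^sup>*"

definition virt_nbhd :: "('x, 'u, 'e) katlas \<Rightarrow> (nat set \<times> 'u) set set" where
  "virt_nbhd A = kdom A // kequiv A"

definition piK :: "('x, 'u, 'e) katlas \<Rightarrow> nat set \<times> 'u \<Rightarrow> (nat set \<times> 'u) set" where
  "piK A p = kequiv A `` {p}"

definition piK_img :: "('x, 'u, 'e) katlas \<Rightarrow> nat set \<Rightarrow> 'u set \<Rightarrow> (nat set \<times> 'u) set set" where
  "piK_img A I S = (\<lambda>x. piK A (I, x)) ` S"

definition iotaX :: "('x, 'u, 'e) katlas \<Rightarrow> (nat set \<times> 'u) set set" where
  "iotaX A = piK A ` {(I, x). I \<in> Iset A \<and> x \<in> zeroset (aK A I)}"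

definition is_reduction :: "('x, 'u, 'e) katlas \<Rightarrow> (nat set \<Rightarrow> 'u set) \<Rightarrow> bool" where
  "is_reduction A V \<longleftrightarrow>
     (\<forall>I \<in> Iset A.
        openin (cU (aK A I)) (V I) \<and>
        compactin (cU (aK A I)) ((cU (aK A I)) closure_of (V I)) \<and>
        (V I \<noteq> {} \<longrightarrow> V I \<inter> zeroset (aK A I) \<noteq> {})) \<and>
     (\<forall>I \<in> Iset A. \<forall>J \<in> Iset A.
        piK_img A I ((cU (aK A I)) closure_of (V I)) \<inter>
        piK_img A J ((cU (aK A J)) closure_of (V J)) \<noteq> {} \<longrightarrow> I \<subseteq> J \<or> J \<subseteq> I) \<and>
     iotaX A \<subseteq> (\<Union>I \<in> Iset A. piK_img A I (V I))"

end

theory Submission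
  imports Defs
begin

text \<open>Choose continuous f_i : X \<rightarrow> \<real> (Urysohn) that equal 1 on a closed shrinking of the
  cover by the basic footprints F_i and vanish outside F_i. The points where the values f_i,
  i \<in> I, are at least 1/|I| while all other values are at most 1/(|I|+1) form compact sets
  D_I \<subseteq> F_I that cover X and are disjoint for incomparable I, J. Their preimages C_I in the
  zero sets are compact. For incomparable I, J the pairs (x, y) \<in> U_I \<times> U_J with
  (I, x) \<sim> (J, y) form a closed set missing C_I \<times> C_J: tameness identifies it with a fibre
  product over X when I \<inter> J = {}, and otherwise with the pairs of images of points of U_{I \<inter> J}
  under two embeddings with closed images. Separating the compact sets from these closed sets
  by neighbourhoods with compact closures gives the reduction.\<close>

lemma locally_compact_Hausdorff_compact_closure_nbhd:
  assumes lc: "locally_compact_space Y" and H: "Hausdorff_space Y" and C: "compactin Y C"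
    and G: "openin Y G" and CG: "C \<subseteq> G"
  obtains W where "openin Y W" "C \<subseteq> W" "Y closure_of W \<subseteq> G" "compactin Y (Y closure_of W)"
proof -
  have reg: "regular_space Y" using lc H locally_compact_Hausdorff_imp_regular_space by blast
  obtain U L where UL: "openin Y U" "compactin Y L" "C \<subseteq> U" "U \<subseteq> L"
    using lc C locally_compact_space_compact_closed_compact[of Y] H by blast
  have "closedin Y (topspace Y - (G \<inter> U))" using G UL(1) by blast
  moreover have "disjnt C (topspace Y - (G \<inter> U))" using CG UL(3) by (auto simp: disjnt_def)
  ultimately obtain W V where WV: "openin Y W" "openin Y V" "C \<subseteq> W"
      "topspace Y - (G \<inter> U) \<subseteq> V" "disjnt W V"
    using regular_space_compact_closed_separation[OF reg C] by metis
  have "W \<subseteq> topspace Y - V" using WV(1,5) openin_subset by (auto simp: disjnt_def)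
  moreover have "closedin Y (topspace Y - V)" using WV(2) by blast
  ultimately have "Y closure_of W \<subseteq> topspace Y - V" by (rule closure_of_minimal)
  then have clGU: "Y closure_of W \<subseteq> G \<inter> U" using WV(4) by blast
  then have "compactin Y (Y closure_of W)"
    using closed_compactin[OF UL(2), of "Y closure_of W"] UL(4) by auto
  with that WV clGU show ?thesis by blast
qed

lemma compact_Times_separated_nbhds:
  assumes "locally_compact_space Y1" "Hausdorff_space Y1"
    and "locally_compact_space Y2" "Hausdorff_space Y2"
    and C1: "compactin Y1 C1" and C2: "compactin Y2 C2"
    and M: "closedin (prod_topology Y1 Y2) M" and disj: "(C1 \<times> C2) \<inter> M = {}"
  obtains W1 W2 where "openin Y1 W1" "openin Y2 W2" "C1 \<subseteq> W1" "C2 \<subseteq> W2"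
    "compactin Y1 (Y1 closure_of W1)" "compactin Y2 (Y2 closure_of W2)"
    "((Y1 closure_of W1) \<times> (Y2 closure_of W2)) \<inter> M = {}"
proof -
  have "openin (prod_topology Y1 Y2) (topspace (prod_topology Y1 Y2) - M)" using M by blast
  moreover have "C1 \<times> C2 \<subseteq> topspace (prod_topology Y1 Y2) - M"
    using disj compactin_subset_topspace[OF C1] compactin_subset_topspace[OF C2] by auto
  ultimately obtain A1 A2 where A: "openin Y1 A1" "openin Y2 A2" "C1 \<subseteq> A1" "C2 \<subseteq> A2"
      "A1 \<times> A2 \<subseteq> topspace (prod_topology Y1 Y2) - M"
    using Wallace_theorem_prod_topology[OF C1 C2] by metis
  obtain W1 where W1: "openin Y1 W1" "C1 \<subseteq> W1" "Y1 closure_of W1 \<subseteq> A1"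
      "compactin Y1 (Y1 closure_of W1)"
    using locally_compact_Hausdorff_compact_closure_nbhd[OF assms(1,2) C1 A(1,3)] by metis
  obtain W2 where W2: "openin Y2 W2" "C2 \<subseteq> W2" "Y2 closure_of W2 \<subseteq> A2"
      "compactin Y2 (Y2 closure_of W2)"
    using locally_compact_Hausdorff_compact_closure_nbhd[OF assms(3,4) C2 A(2,4)] by metis
  have "((Y1 closure_of W1) \<times> (Y2 closure_of W2)) \<inter> M = {}"
    using W1(3) W2(3) A(5) by blast
  with that W1 W2 show ?thesis by blast
qed

lemma compact_families_separated_nbhds:
  fixes Y :: "'i \<Rightarrow> 'a topology"
  assumes S: "finite S"
    and lc: "\<And>I. I \<in> S \<Longrightarrow> locally_compact_space (Y I)"
    and H: "\<And>I. I \<in> S \<Longrightarrow> Hausdorff_space (Y I)"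
    and C: "\<And>I. I \<in> S \<Longrightarrow> compactin (Y I) (C I)"
    and M: "\<And>I J. \<lbrakk>I \<in> S; J \<in> S; R I J\<rbrakk> \<Longrightarrow> closedin (prod_topology (Y I) (Y J)) (M I J)"
    and disj: "\<And>I J. \<lbrakk>I \<in> S; J \<in> S; R I J\<rbrakk> \<Longrightarrow> (C I \<times> C J) \<inter> M I J = {}"
  obtains V where "\<And>I. I \<in> S \<Longrightarrow> openin (Y I) (V I)" "\<And>I. I \<in> S \<Longrightarrow> C I \<subseteq> V I"
    "\<And>I. I \<in> S \<Longrightarrow> compactin (Y I) (Y I closure_of V I)" "\<And>I. C I = {} \<Longrightarrow> V I = {}"
    "\<And>I J. \<lbrakk>I \<in> S; J \<in> S; R I J\<rbrakk> \<Longrightarrow> ((Y I closure_of V I) \<times> (Y J closure_of V J)) \<inter> M I J = {}"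
proof -
  have "\<exists>W. I \<in> S \<longrightarrow> openin (Y I) W \<and> C I \<subseteq> W \<and> compactin (Y I) (Y I closure_of W)" for I
  proof (cases "I \<in> S")
    case True
    obtain W where "openin (Y I) W" "C I \<subseteq> W" "compactin (Y I) (Y I closure_of W)"
      by (rule locally_compact_Hausdorff_compact_closure_nbhd[OF lc[OF True] H[OF True] C[OF True]
            openin_topspace compactin_subset_topspace[OF C[OF True]]])
    then show ?thesis by blast
  qed blast
  then obtain W0 where W0: "\<And>I. I \<in> S \<Longrightarrow>
      openin (Y I) (W0 I) \<and> C I \<subseteq> W0 I \<and> compactin (Y I) (Y I closure_of W0 I)"
    by metis
  have "\<exists>W. I \<in> S \<and> J \<in> S \<and> R I J \<longrightarrow> openin (Y I) (fst W) \<and> openin (Y J) (snd W) \<and>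
      C I \<subseteq> fst W \<and> C J \<subseteq> snd W \<and>
      ((Y I closure_of fst W) \<times> (Y J closure_of snd W)) \<inter> M I J = {}" for I J
  proof (cases "I \<in> S \<and> J \<in> S \<and> R I J")
    case True
    then have IJ: "I \<in> S" "J \<in> S" "R I J" by auto
    obtain W1 W2 where "openin (Y I) W1" "openin (Y J) W2" "C I \<subseteq> W1" "C J \<subseteq> W2"
      "((Y I closure_of W1) \<times> (Y J closure_of W2)) \<inter> M I J = {}"
      by (rule compact_Times_separated_nbhds[OF lc[OF IJ(1)] H[OF IJ(1)] lc[OF IJ(2)] H[OF IJ(2)]
            C[OF IJ(1)] C[OF IJ(2)] M[OF IJ] disj[OF IJ]])
    then show ?thesis by (intro exI[of _ "(W1, W2)"]) simp
  qed blast
  then obtain W where W: "\<And>I J. \<lbrakk>I \<in> S; J \<in> S; R I J\<rbrakk> \<Longrightarrow>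
      openin (Y I) (fst (W I J)) \<and> openin (Y J) (snd (W I J)) \<and>
      C I \<subseteq> fst (W I J) \<and> C J \<subseteq> snd (W I J) \<and>
      ((Y I closure_of fst (W I J)) \<times> (Y J closure_of snd (W I J))) \<inter> M I J = {}"
    by metis
  define N where
    "N I = (\<lambda>J. fst (W I J)) ` {J \<in> S. R I J} \<union> (\<lambda>J. snd (W J I)) ` {J \<in> S. R J I}" for I
  define V where "V I = (if C I = {} then {} else W0 I \<inter> \<Inter>(N I))" for I
  have N: "finite (N I)" "\<And>G. G \<in> N I \<Longrightarrow> openin (Y I) G \<and> C I \<subseteq> G" if "I \<in> S" for I
    using S that unfolding N_def by (auto dest: W)
  show thesis
  proof
    fix I assume I: "I \<in> S"
    show "openin (Y I) (V I)"
      using openin_Int_Inter[OF N(1)[OF I]] W0[OF I] N(2)[OF I] by (simp add: V_def)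
    show "C I \<subseteq> V I" using W0[OF I] N(2)[OF I] by (auto simp: V_def)
    have "Y I closure_of V I \<subseteq> Y I closure_of W0 I" by (rule closure_of_mono) (auto simp: V_def)
    then show "compactin (Y I) (Y I closure_of V I)"
      using W0[OF I] closed_compactin closedin_closure_of by blast
  next
    fix I J assume IJ: "I \<in> S" "J \<in> S" "R I J"
    have "V I \<subseteq> fst (W I J)" "V J \<subseteq> snd (W I J)" using IJ by (auto simp: V_def N_def)
    then show "((Y I closure_of V I) \<times> (Y J closure_of V J)) \<inter> M I J = {}"
      using W[OF IJ] closure_of_mono by blast
  qed (simp add: V_def)
qed

lemma closedin_fibre_product:
  assumes Z: "Hausdorff_space Z" and S1: "closedin Y1 S1" and S2: "closedin Y2 S2"
    and f: "continuous_map (subtopology Y1 S1) Z f" and g: "continuous_map (subtopology Y2 S2) Z g"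
  shows "closedin (prod_topology Y1 Y2) {(a, b). a \<in> S1 \<and> b \<in> S2 \<and> f a = g b}"
proof -
  let ?P = "prod_topology (subtopology Y1 S1) (subtopology Y2 S2)"
  have "closedin ?P {p \<in> topspace ?P. (f \<circ> fst) p = (g \<circ> snd) p}"
    by (intro closedin_continuous_maps_eq[OF Z] continuous_map_compose[OF continuous_map_fst f]
        continuous_map_compose[OF continuous_map_snd g])
  moreover have "{p \<in> topspace ?P. (f \<circ> fst) p = (g \<circ> snd) p} =
      {(a, b). a \<in> S1 \<and> b \<in> S2 \<and> f a = g b}"
    using closedin_subset[OF S1] closedin_subset[OF S2] by auto
  ultimately have "closedin (subtopology (prod_topology Y1 Y2) (S1 \<times> S2))
      {(a, b). a \<in> S1 \<and> b \<in> S2 \<and> f a = g b}"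
    by (simp add: subtopology_Times)
  moreover have "closedin (prod_topology Y1 Y2) (S1 \<times> S2)"
    using S1 S2 by (simp add: closedin_prod_Times_iff)
  ultimately show ?thesis by (rule closedin_trans_full)
qed

text \<open>The pairs of images of a common point under two closed embeddings are a fibre product
  over the inverse maps.\<close>

lemma closedin_embedding_pairs:
  assumes Z: "Hausdorff_space Z" and P: "P \<subseteq> topspace Z" and Q: "Q \<subseteq> topspace Z"
    and f: "embedding_map (subtopology Z P) Y1 f" and g: "embedding_map (subtopology Z Q) Y2 g"
    and "closedin Y1 (f ` P)" "closedin Y2 (g ` Q)"
  shows "closedin (prod_topology Y1 Y2) {(f z, g z) | z. z \<in> P \<inter> Q}"
proof -
  have "homeomorphic_map (subtopology Z P) (subtopology Y1 (f ` P)) f"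
    using f P by (simp add: embedding_map_def Int_absorb1)
  then obtain f' where f': "homeomorphic_maps (subtopology Z P) (subtopology Y1 (f ` P)) f f'"
    by (auto simp: homeomorphic_map_maps)
  have "homeomorphic_map (subtopology Z Q) (subtopology Y2 (g ` Q)) g"
    using g Q by (simp add: embedding_map_def Int_absorb1)
  then obtain g' where g': "homeomorphic_maps (subtopology Z Q) (subtopology Y2 (g ` Q)) g g'"
    by (auto simp: homeomorphic_map_maps)
  have "continuous_map (subtopology Y1 (f ` P)) Z f'" "continuous_map (subtopology Y2 (g ` Q)) Z g'"
    using f' g' by (auto simp: homeomorphic_maps_def continuous_map_in_subtopology)
  then have "closedin (prod_topology Y1 Y2) {(a, b). a \<in> f ` P \<and> b \<in> g ` Q \<and> f' a = g' b}"
    using closedin_fibre_product[OF Z assms(6,7)] by blast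
  moreover have "{(a, b). a \<in> f ` P \<and> b \<in> g ` Q \<and> f' a = g' b} = {(f z, g z) | z. z \<in> P \<inter> Q}"
  proof -
    have "f' (f z) = z" if "z \<in> P" for z
      using f' that P by (auto simp: homeomorphic_maps_def)
    moreover have "g' (g z) = z" if "z \<in> Q" for z
      using g' that Q by (auto simp: homeomorphic_maps_def)
    ultimately show ?thesis by fastforce
  qed
  ultimately show ?thesis by simp
qed

lemma embedding_map_inj_on_image:
  assumes "embedding_map X Y f"
  shows embedding_map_inj_on: "inj_on f (topspace X)"
    and embedding_map_image_subset: "f ` topspace X \<subseteq> topspace Y"
proof -
  have h: "homeomorphic_map X (subtopology Y (f ` topspace X)) f"
    using assms by (simp add: embedding_map_def)
  show "inj_on f (topspace X)" using homeomorphic_imp_injective_map[OF h] .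
  show "f ` topspace X \<subseteq> topspace Y"
    using homeomorphic_imp_surjective_map[OF h] by (metis Int_lower1 topspace_subtopology)
qed

section \<open>Incomparable pieces of a finite open cover\<close>

lemma compact_regular_closed_shrinking:
  assumes cX: "compact_space X" and rX: "regular_space X"
    and op: "\<And>i. i \<in> S \<Longrightarrow> openin X (F i)" and cov: "topspace X \<subseteq> (\<Union>i\<in>S. F i)"
  obtains K where "\<And>i. i \<in> S \<Longrightarrow> closedin X (K i)" "\<And>i. i \<in> S \<Longrightarrow> K i \<subseteq> F i"
    "topspace X \<subseteq> (\<Union>i\<in>S. K i)"
proof -
  have nb: "neighbourhood_base_of (closedin X) X" using rX neighbourhood_base_of_closedin by blast
  have "\<exists>i U V. i \<in> S \<and> openin X U \<and> closedin X V \<and> x \<in> U \<and> U \<subseteq> V \<and> V \<subseteq> F i"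
    if x: "x \<in> topspace X" for x
  proof -
    obtain i where i: "i \<in> S" "x \<in> F i" using cov x by blast
    then obtain U V where "openin X U" "closedin X V" "x \<in> U" "U \<subseteq> V" "V \<subseteq> F i"
      using nb op[OF i(1)] unfolding neighbourhood_base_of by metis
    with i show ?thesis by blast
  qed
  then obtain ix U V where UV: "\<And>x. x \<in> topspace X \<Longrightarrow> ix x \<in> S \<and> openin X (U x) \<and>
      closedin X (V x) \<and> x \<in> U x \<and> U x \<subseteq> V x \<and> V x \<subseteq> F (ix x)"
    by metis
  have "(\<forall>W\<in>U ` topspace X. openin X W) \<and> topspace X \<subseteq> \<Union>(U ` topspace X)" using UV by blast
  then obtain \<U> where \<U>: "finite \<U>" "\<U> \<subseteq> U ` topspace X" "topspace X \<subseteq> \<Union>\<U>"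
    using cX unfolding compact_space_alt by meson
  then obtain T where T: "T \<subseteq> topspace X" "finite T" "\<U> = U ` T"
    using finite_subset_image by metis
  show thesis
  proof
    fix i assume "i \<in> S"
    show "closedin X (\<Union>(V ` {x\<in>T. ix x = i}))"
      by (rule closedin_Union) (use T UV in auto)
    show "\<Union>(V ` {x\<in>T. ix x = i}) \<subseteq> F i" using T UV by fastforce
  next
    show "topspace X \<subseteq> (\<Union>i\<in>S. \<Union>(V ` {x\<in>T. ix x = i}))"
    proof
      fix y assume "y \<in> topspace X"
      then obtain x where x: "x \<in> T" "y \<in> U x" using \<U>(3) T(3) by blast
      then have "y \<in> V x" "ix x \<in> S" using UV T(1) by blast+
      with x show "y \<in> (\<Union>i\<in>S. \<Union>(V ` {x\<in>T. ix x = i}))" by blast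
    qed
  qed
qed

definition level_piece :: "'x topology \<Rightarrow> 'i set \<Rightarrow> ('i \<Rightarrow> 'x \<Rightarrow> real) \<Rightarrow> 'i set \<Rightarrow> 'x set" where
  "level_piece X S f I = {x \<in> topspace X. (\<forall>i\<in>I. 1 / real (card I) \<le> f i x) \<and>
     (\<forall>j\<in>S - I. f j x \<le> 1 / real (Suc (card I)))}"

lemma closedin_level_piece:
  assumes f: "\<And>i. i \<in> S \<Longrightarrow> continuous_map X euclideanreal (f i)" and I: "I \<subseteq> S"
  shows "closedin X (level_piece X S f I)"
proof -
  let ?a = "1 / real (card I)" and ?b = "1 / real (Suc (card I))"
  let ?G = "insert (topspace X) ((\<lambda>i. {x \<in> topspace X. f i x \<in> {?a..}}) ` I \<union>
       (\<lambda>j. {x \<in> topspace X. f j x \<in> {..?b}}) ` (S - I))"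
  have pre: "closedin X {x \<in> topspace X. f i x \<in> T}" if "i \<in> S" "closed T" for i T
    using closedin_continuous_map_preimage[OF f] that by simp
  have "closedin X {x \<in> topspace X. a \<le> f i x}" if "i \<in> S" for i a
    using pre[OF that, of "{a..}"] by simp
  moreover have "closedin X {x \<in> topspace X. f i x \<le> a}" if "i \<in> S" for i a
    using pre[OF that, of "{..a}"] by simp
  ultimately have "closedin X (\<Inter>?G)" using I by (intro closedin_Inter) auto
  moreover have "level_piece X S f I = \<Inter>?G" unfolding level_piece_def by auto
  ultimately show ?thesis by simp
qed

lemma level_piece_subset_Inter:
  assumes f0: "\<And>i x. \<lbrakk>i \<in> S; x \<in> topspace X; x \<notin> F i\<rbrakk> \<Longrightarrow> f i x = 0"
    and I: "I \<subseteq> S" "finite I" "I \<noteq> {}"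
  shows "level_piece X S f I \<subseteq> (\<Inter>i\<in>I. F i)"
proof
  fix x assume x: "x \<in> level_piece X S f I"
  have "x \<in> F i" if i: "i \<in> I" for i
  proof (rule ccontr)
    assume "x \<notin> F i"
    then have "f i x = 0" using f0 i I(1) x by (auto simp: level_piece_def)
    moreover have "1 / real (card I) \<le> f i x" using x i by (simp add: level_piece_def)
    moreover have "0 < card I" using I(2,3) by (simp add: card_gt_0_iff)
    ultimately show False by simp
  qed
  then show "x \<in> (\<Inter>i\<in>I. F i)" by blast
qed

lemma level_pieces_disjoint:
  assumes S: "finite S" and IJ: "I \<subseteq> S" "J \<subseteq> S" "\<not> I \<subseteq> J" "\<not> J \<subseteq> I"
  shows "level_piece X S f I \<inter> level_piece X S f J = {}"
proof -
  have False if I: "I \<subseteq> S" "\<not> I \<subseteq> J" and c: "card I \<le> card J"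
    and x: "x \<in> level_piece X S f I" "x \<in> level_piece X S f J" for I J x
  proof -
    obtain i where i: "i \<in> I" "i \<notin> J" using I(2) by blast
    have "0 < card I" using i(1) I(1) S by (auto simp: card_gt_0_iff finite_subset)
    have "1 / real (card I) \<le> f i x" using x(1) i(1) by (simp add: level_piece_def)
    also have "\<dots> \<le> 1 / real (Suc (card J))" using x(2) i I(1) by (auto simp: level_piece_def)
    also have "\<dots> \<le> 1 / real (Suc (card I))" using c \<open>0 < card I\<close> by (simp add: frac_le)
    also have "\<dots> < 1 / real (card I)" using \<open>0 < card I\<close> by (simp add: frac_less2)
    finally show False by simp
  qed
  then show ?thesis using IJ by (metis disjoint_iff nle_le)
qed

text \<open>Take k maximal such that at least k of the values reach 1/k; maximality of k leaves no
  value strictly between 1/(k+1) and 1/k.\<close>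

lemma threshold_gap:
  fixes v :: "'i \<Rightarrow> real"
  assumes S: "finite S" and i0: "i0 \<in> S" "1 \<le> v i0"
  obtains k where "1 \<le> k" "card {i \<in> S. 1 / real k \<le> v i} = k"
    "{i \<in> S. 1 / real k \<le> v i} = {i \<in> S. 1 / real (Suc k) < v i}"
proof -
  define As where "As k = {i \<in> S. 1 / real k \<le> v i}" for k
  define Bs where "Bs k = {i \<in> S. 1 / real (Suc k) < v i}" for k
  define Q where "Q = {k \<in> {1..card S}. k \<le> card (As k)}"
  have fin: "finite (As k)" "finite (Bs k)" for k using S by (auto simp: As_def Bs_def)
  have "0 < card S" using S i0(1) by (auto simp: card_gt_0_iff)
  moreover have "0 < card (As 1)" using i0 fin(1)[of 1] by (auto simp: As_def card_gt_0_iff)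
  ultimately have "1 \<in> Q" by (simp add: Q_def)
  define k where "k = Max Q"
  have "finite Q" by (simp add: Q_def)
  then have "k \<in> Q" using Max_in \<open>1 \<in> Q\<close> unfolding k_def by blast
  then have k: "1 \<le> k" "k \<le> card S" "k \<le> card (As k)" by (auto simp: Q_def)
  have "1 / real (Suc k) < 1 / real k" using k(1) by (simp add: frac_less2)
  then have AB: "As k \<subseteq> Bs k" by (auto simp: As_def Bs_def)
  have "card (Bs k) \<le> k"
  proof (cases "k = card S")
    case True
    have "Bs k \<subseteq> S" by (auto simp: Bs_def)
    then show ?thesis using True S by (simp add: card_mono)
  next
    case False
    have "Suc k \<notin> Q"
    proof
      assume "Suc k \<in> Q"
      then have "Suc k \<le> k" unfolding k_def using Max_ge[OF \<open>finite Q\<close>] by blast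
      then show False by simp
    qed
    then have "card (As (Suc k)) \<le> k" using False k(2) by (simp add: Q_def)
    moreover have "card (Bs k) \<le> card (As (Suc k))"
      by (rule card_mono[OF fin(1)]) (auto simp: As_def Bs_def)
    ultimately show ?thesis by linarith
  qed
  then have "As k = Bs k" "card (As k) = k"
    using card_subset_eq[OF fin(2) AB] card_mono[OF fin(2) AB] k(3) by auto
  with k(1) that show thesis unfolding As_def Bs_def by blast
qed

lemma level_pieces_cover:
  assumes S: "finite S" and x: "x \<in> topspace X" and i0: "i0 \<in> S" "f i0 x = 1"
  shows "\<exists>I. I \<noteq> {} \<and> I \<subseteq> S \<and> x \<in> level_piece X S f I"
proof -
  obtain k where k: "1 \<le> k" "card {i \<in> S. 1 / real k \<le> f i x} = k"
      "{i \<in> S. 1 / real k \<le> f i x} = {i \<in> S. 1 / real (Suc k) < f i x}"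
    using threshold_gap[OF S i0(1), of "\<lambda>i. f i x"] i0(2) by auto
  let ?I = "{i \<in> S. 1 / real k \<le> f i x}"
  have "f j x \<le> 1 / real (Suc k)" if "j \<in> S - ?I" for j
    using that unfolding k(3) by auto
  then have "x \<in> level_piece X S f ?I" using x unfolding level_piece_def k(2) by auto
  moreover have "?I \<noteq> {}" using k(1,2) by (metis card.empty not_one_le_zero)
  moreover have "?I \<subseteq> S" by blast
  ultimately show ?thesis by (intro exI[of _ ?I]) simp
qed

lemma finite_open_cover_incomparable_pieces:
  assumes cX: "compact_space X" and HX: "Hausdorff_space X" and S: "finite S"
    and op: "\<And>i. i \<in> S \<Longrightarrow> openin X (F i)" and cov: "topspace X \<subseteq> (\<Union>i\<in>S. F i)"
  obtains D where "\<And>I. \<lbrakk>I \<subseteq> S; I \<noteq> {}\<rbrakk> \<Longrightarrow> closedin X (D I) \<and> D I \<subseteq> (\<Inter>i\<in>I. F i)"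
    "\<And>I J. \<lbrakk>I \<subseteq> S; J \<subseteq> S; \<not> I \<subseteq> J; \<not> J \<subseteq> I\<rbrakk> \<Longrightarrow> D I \<inter> D J = {}"
    "\<And>x. x \<in> topspace X \<Longrightarrow> \<exists>I. I \<noteq> {} \<and> I \<subseteq> S \<and> x \<in> D I"
proof -
  have rX: "regular_space X" using compact_Hausdorff_imp_regular_space[OF cX HX] .
  have nX: "normal_space X" using compact_Hausdorff_or_regular_imp_normal_space cX HX by blast
  obtain K where K: "\<And>i. i \<in> S \<Longrightarrow> closedin X (K i)" "\<And>i. i \<in> S \<Longrightarrow> K i \<subseteq> F i"
      "topspace X \<subseteq> (\<Union>i\<in>S. K i)"
    using compact_regular_closed_shrinking[OF cX rX op cov] by blast
  have "\<exists>g. continuous_map X euclideanreal g \<and> g ` K i \<subseteq> {1} \<and> g ` (topspace X - F i) \<subseteq> {0}"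
    if i: "i \<in> S" for i
  proof -
    have "closedin X (topspace X - F i)" using op[OF i] by blast
    moreover have "disjnt (K i) (topspace X - F i)" using K(2)[OF i] by (auto simp: disjnt_def)
    ultimately obtain g :: "_ \<Rightarrow> real" where "continuous_map X euclideanreal g" "g ` K i \<subseteq> {1}"
        "g ` (topspace X - F i) \<subseteq> {0}"
      by (rule Urysohn_lemma_alt[OF nX K(1)[OF i]])
    then show ?thesis by blast
  qed
  then obtain f where f: "\<And>i. i \<in> S \<Longrightarrow> continuous_map X euclideanreal (f i) \<and>
      f i ` K i \<subseteq> {1} \<and> f i ` (topspace X - F i) \<subseteq> {0}"
    by metis
  show thesis
  proof
    fix I assume I: "I \<subseteq> S" "I \<noteq> {}"
    have "closedin X (level_piece X S f I)" using closedin_level_piece[OF _ I(1)] f by blast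
    moreover have "level_piece X S f I \<subseteq> (\<Inter>i\<in>I. F i)"
      using level_piece_subset_Inter[OF _ I(1) finite_subset[OF I(1) S] I(2), of X F f] f by blast
    ultimately show "closedin X (level_piece X S f I) \<and> level_piece X S f I \<subseteq> (\<Inter>i\<in>I. F i)" ..
  next
    show "level_piece X S f I \<inter> level_piece X S f J = {}"
      if "I \<subseteq> S" "J \<subseteq> S" "\<not> I \<subseteq> J" "\<not> J \<subseteq> I" for I J
      using level_pieces_disjoint[OF S that] .
  next
    fix x assume x: "x \<in> topspace X"
    then obtain i where i: "i \<in> S" "x \<in> K i" using K(3) by blast
    then have "f i x = 1" using f by blast
    then show "\<exists>I. I \<noteq> {} \<and> I \<subseteq> S \<and> x \<in> level_piece X S f I"
      by (rule level_pieces_cover[OF S x i(1)])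
  qed
qed

section \<open>Tame topological Kuranishi atlases\<close>

locale tame_kuranishi_atlas =
  fixes X :: "'x topology" and A :: "('x, 'u, 'e) katlas"
  assumes tame_atlas: "tame_kur_atlas X A" and Hausdorff_X: "Hausdorff_space X"
begin

text \<open>Paper notation: UT I and ET I are the spaces U_I and E_I, TU I is the point set of U_I,
  zsec I, sec I and proj I are 0_I, s_I and pr_I, and UU I J, ph I J, EE I J are U_IJ,
  phi_IJ and E_IJ.\<close>

abbreviation "idx \<equiv> Iset A"
abbreviation "UT I \<equiv> cU (aK A I)"
abbreviation "ET I \<equiv> cE (aK A I)"
abbreviation "TU I \<equiv> topspace (UT I)"
abbreviation "foot I \<equiv> cF (aK A I)"
abbreviation "zeros I \<equiv> zeroset (aK A I)"
abbreviation "sec I \<equiv> cs (aK A I)"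
abbreviation "zsec I \<equiv> czero (aK A I)"
abbreviation "proj I \<equiv> cpr (aK A I)"
abbreviation "psi I \<equiv> cpsi (aK A I)"
abbreviation "UU I J \<equiv> UUx A I J"
abbreviation "ph I J \<equiv> phix A I J"
abbreviation "EE I J \<equiv> aEE A I J"

lemma atlas_transition: "transition_data X A" and atlas_cocycle: "cocycle A"
  and atlas_weak_cocycle: "weak_cocycle A" and atlas_filtered: "filtered A" and atlas_tame: "tame A"
  using tame_atlas by (auto simp: tame_kur_atlas_def kur_atlas_def cocycle_def)

lemma idx_iff: "I \<in> idx \<longleftrightarrow> I \<noteq> {} \<and> I \<subseteq> {1..aN A} \<and> (\<Inter>i\<in>I. foot {i}) \<noteq> {}"
  by (simp add: Iset_def)

lemma finite_idx: "finite idx"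
  by (rule finite_subset[of _ "Pow {1..aN A}"]) (auto simp: Iset_def)

lemma idx_finite: "I \<in> idx \<Longrightarrow> finite I"
  by (auto simp: Iset_def intro: finite_subset)

lemma idx_subset: "I \<in> idx \<Longrightarrow> H \<subseteq> I \<Longrightarrow> H \<noteq> {} \<Longrightarrow> H \<in> idx"
  unfolding Iset_def by blast

lemma chart_props:
  assumes "I \<in> idx"
  shows kchart: "is_kchart X (aK A I)" and foot_eq_Inter: "foot I = (\<Inter>i\<in>I. foot {i})"
proof -
  have "is_kchart X (aK A I) \<and> foot I = (\<Inter>i\<in>I. foot {i})"
  proof (cases "card I \<ge> 2")
    case True
    then show ?thesis using atlas_transition assms by (simp add: transition_data_def)
  next
    case False
    have "card I > 0" using assms idx_finite by (auto simp: Iset_def card_gt_0_iff)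
    then have "card I = 1" using False by linarith
    then obtain i where i: "I = {i}" by (rule card_1_singletonE)
    then have "i \<in> {1..aN A}" using assms by (auto simp: Iset_def)
    then show ?thesis using atlas_transition i by (simp add: transition_data_def)
  qed
  then show "is_kchart X (aK A I)" "foot I = (\<Inter>i\<in>I. foot {i})" by auto
qed

lemma idx_Un:
  assumes "I \<in> idx" "J \<in> idx" "p \<in> foot I" "p \<in> foot J"
  shows "I \<union> J \<in> idx"
proof -
  have "p \<in> (\<Inter>i\<in>I \<union> J. foot {i})"
    using foot_eq_Inter[OF assms(1)] foot_eq_Inter[OF assms(2)] assms(3,4) by auto
  then show ?thesis using assms(1,2) unfolding idx_iff by blast
qed

lemma chart_facts:
  assumes "I \<in> idx"
  shows UT_Hausdorff: "Hausdorff_space (UT I)" and ET_Hausdorff: "Hausdorff_space (ET I)"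
    and UT_locally_compact: "locally_compact_space (UT I)"
    and continuous_sec: "continuous_map (UT I) (ET I) (sec I)"
    and continuous_zsec: "continuous_map (UT I) (ET I) (zsec I)"
    and proj_zsec: "\<And>x. x \<in> TU I \<Longrightarrow> proj I (zsec I x) = x"
    and proj_sec: "\<And>x. x \<in> TU I \<Longrightarrow> proj I (sec I x) = x"
    and psi_homeomorphic:
      "homeomorphic_map (subtopology (UT I) (zeros I)) (subtopology X (foot I)) (psi I)"
    and openin_foot: "openin X (foot I)"
  using kchart[OF assms] unfolding is_kchart_def by (auto intro: metrizable_imp_Hausdorff_space)

lemma zeros_subset: "zeros I \<subseteq> TU I"
  by (auto simp: zeroset_def)

lemma zeros_closed: "I \<in> idx \<Longrightarrow> closedin (UT I) (zeros I)"
  unfolding zeroset_def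
  by (rule closedin_continuous_maps_eq[OF ET_Hausdorff continuous_sec continuous_zsec])

lemma psi_image_inj:
  assumes "I \<in> idx"
  shows psi_image: "psi I ` zeros I = foot I" and psi_inj: "inj_on (psi I) (zeros I)"
proof -
  note h = psi_homeomorphic[OF assms]
  have "topspace (subtopology (UT I) (zeros I)) = zeros I" using zeros_subset by auto
  moreover have "topspace (subtopology X (foot I)) = foot I"
    using openin_subset[OF openin_foot[OF assms]] by auto
  ultimately show "psi I ` zeros I = foot I" "inj_on (psi I) (zeros I)"
    using homeomorphic_imp_surjective_map[OF h] homeomorphic_imp_injective_map[OF h] by simp_all
qed

lemma continuous_psi: "I \<in> idx \<Longrightarrow> continuous_map (subtopology (UT I) (zeros I)) X (psi I)"
  by (metis homeomorphic_imp_continuous_map psi_homeomorphic continuous_map_in_subtopology)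

lemma UU_refl [simp]: "I \<in> idx \<Longrightarrow> UU I I = TU I"
  by (simp add: UUx_def)

lemma UU_notin: "J \<notin> idx \<Longrightarrow> UU I J = {}"
  by (simp add: UUx_def)

lemma ph_refl [simp]: "ph I I = id"
  by (simp add: phix_def)

lemma coord_change:
  assumes "I \<in> idx" "J \<in> idx" "I \<subset> J"
  shows openin_UU: "openin (UT I) (UU I J)"
    and UU_Int_zeros: "UU I J \<inter> zeros I = {x \<in> zeros I. psi I x \<in> foot I \<inter> foot J}"
    and bundle_embedding:
      "embedding_map (subtopology (ET I) {e \<in> topspace (ET I). proj I e \<in> UU I J}) (ET J)
        (aPhi A I J)"
    and ph_embedding: "embedding_map (subtopology (UT I) (UU I J)) (UT J) (ph I J)"
    and zsec_ph: "\<And>x. x \<in> UU I J \<Longrightarrow> zsec J (ph I J x) = aPhi A I J (zsec I x)"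
    and sec_ph: "\<And>x. x \<in> UU I J \<Longrightarrow> sec J (ph I J x) = aPhi A I J (sec I x)"
    and ph_zeros_inv:
      "\<And>x. x \<in> UU I J \<Longrightarrow> x \<in> zeros I \<Longrightarrow> ph I J x = inv_into (zeros J) (psi J) (psi I x)"
proof -
  have "UU I J = aUU A I J" "ph I J = aphi A I J"
    using assms by (auto simp: UUx_def phix_def)
  moreover have "is_coord_change (aK A I) (aK A J) (aUU A I J) (aPhi A I J) (aphi A I J)"
    using atlas_transition assms unfolding transition_data_def by blast
  ultimately show "openin (UT I) (UU I J)"
    and "UU I J \<inter> zeros I = {x \<in> zeros I. psi I x \<in> foot I \<inter> foot J}"
    and "embedding_map (subtopology (ET I) {e \<in> topspace (ET I). proj I e \<in> UU I J}) (ET J)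
      (aPhi A I J)"
    and "embedding_map (subtopology (UT I) (UU I J)) (UT J) (ph I J)"
    and "\<And>x. x \<in> UU I J \<Longrightarrow> zsec J (ph I J x) = aPhi A I J (zsec I x)"
    and "\<And>x. x \<in> UU I J \<Longrightarrow> sec J (ph I J x) = aPhi A I J (sec I x)"
    and "\<And>x. x \<in> UU I J \<Longrightarrow> x \<in> zeros I \<Longrightarrow> ph I J x = inv_into (zeros J) (psi J) (psi I x)"
    by (auto simp: is_coord_change_def)
qed

lemma UU_subset: "\<lbrakk>I \<in> idx; J \<in> idx; I \<subseteq> J\<rbrakk> \<Longrightarrow> UU I J \<subseteq> TU I"
  by (cases "I = J") (auto dest: openin_subset[OF openin_UU])

lemma ph_in:
  assumes "I \<in> idx" "J \<in> idx" "I \<subseteq> J" "x \<in> UU I J"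
  shows "ph I J x \<in> TU J"
proof (cases "I = J")
  case False
  then have "I \<subset> J" using assms(3) by blast
  then show ?thesis
    using embedding_map_image_subset[OF ph_embedding[OF assms(1,2)]] UU_subset[OF assms(1-3)]
      assms(4)
    by (auto simp: Int_absorb1)
qed (use assms in simp)

lemma ph_inj:
  assumes "I \<in> idx" "J \<in> idx" "I \<subseteq> J"
  shows "inj_on (ph I J) (UU I J)"
proof (cases "I = J")
  case False
  then have "I \<subset> J" using assms(3) by blast
  then show ?thesis
    using embedding_map_inj_on[OF ph_embedding[OF assms(1,2)]] UU_subset[OF assms(1-3)]
    by (simp add: Int_absorb1)
qed simp

lemma ph_zeros:
  assumes "I \<in> idx" "J \<in> idx" "I \<subseteq> J" "x \<in> UU I J" "x \<in> zeros I"
  shows "ph I J x \<in> zeros J \<and> psi J (ph I J x) = psi I x"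
proof (cases "I = J")
  case False
  then have IJ: "I \<subset> J" using assms(3) by blast
  have "psi I x \<in> foot J" using UU_Int_zeros[OF assms(1,2) IJ] assms(4,5) by blast
  then have "psi I x \<in> psi J ` zeros J" using psi_image[OF assms(2)] by simp
  then show ?thesis
    using ph_zeros_inv[OF assms(1,2) IJ assms(4,5)] by (simp add: inv_into_into f_inv_into_f)
qed (use assms in simp)

lemma zeros_reflect:
  assumes "I \<in> idx" "J \<in> idx" "I \<subseteq> J" "x \<in> UU I J" "ph I J x \<in> zeros J"
  shows "x \<in> zeros I"
proof (cases "I = J")
  case False
  then have IJ: "I \<subset> J" using assms(3) by blast
  have x: "x \<in> TU I" using assms(4) UU_subset[OF assms(1-3)] by blast
  have "aPhi A I J (sec I x) = aPhi A I J (zsec I x)"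
    using assms(5) sec_ph[OF assms(1,2) IJ assms(4)] zsec_ph[OF assms(1,2) IJ assms(4)]
    by (simp add: zeroset_def)
  moreover have "inj_on (aPhi A I J) {e \<in> topspace (ET I). proj I e \<in> UU I J}"
    using embedding_map_inj_on[OF bundle_embedding[OF assms(1,2) IJ]] by (simp add: Int_absorb1)
  moreover have "sec I x \<in> topspace (ET I)" "zsec I x \<in> topspace (ET I)"
    using continuous_map_image_subset_topspace[OF continuous_sec[OF assms(1)]]
      continuous_map_image_subset_topspace[OF continuous_zsec[OF assms(1)]] x by blast+
  ultimately have "sec I x = zsec I x"
    using proj_sec[OF assms(1) x] proj_zsec[OF assms(1) x] assms(4) unfolding inj_on_def by auto
  then show ?thesis using x by (simp add: zeroset_def)
qed (use assms in simp)

text \<open>The cocycle condition gives the domain inclusion; the weak cocycle condition along the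
  zero section, which is injective, gives the identity.\<close>

lemma ph_comp_strict:
  assumes I: "I \<in> idx" and J: "J \<in> idx" and K: "K \<in> idx" and IJK: "I \<subset> J" "J \<subset> K"
    and x: "x \<in> UU I J" "ph I J x \<in> UU J K"
  shows "x \<in> UU I K \<and> ph J K (ph I J x) = ph I K x"
proof -
  have IK: "I \<subset> K" using IJK by blast
  have UU_eqs: "UU I J = aUU A I J" "UU J K = aUU A J K" "UU I K = aUU A I K"
    and ph_eqs: "ph I J = aphi A I J"
    using IJK IK J K by (auto simp: UUx_def phix_def)
  have UUU: "x \<in> UUU A I J K" using x unfolding UU_eqs ph_eqs UUU_def by blast
  moreover have "UUU A I J K \<subseteq> aUU A I K"
    using atlas_cocycle[unfolded cocycle_def, THEN conjunct2, rule_format, OF I J K conjI[OF IJK]] .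
  ultimately have xIK: "x \<in> UU I K" unfolding UU_eqs by blast
  have xT: "x \<in> TU I" using x(1) UU_subset[OF I J] IJK by blast
  have ez: "zsec I x \<in> topspace (ET I)"
    using continuous_map_image_subset_topspace[OF continuous_zsec[OF I]] xT by blast
  have "proj I (zsec I x) \<in> UUU A I J K \<inter> aUU A I K"
    using proj_zsec[OF I xT] UUU xIK unfolding UU_eqs by simp
  then have "aPhi A J K (aPhi A I J (zsec I x)) = aPhi A I K (zsec I x)"
    by (rule atlas_weak_cocycle[unfolded weak_cocycle_def, rule_format, OF I J K conjI[OF IJK] ez])
  then have "zsec K (ph J K (ph I J x)) = zsec K (ph I K x)"
    using zsec_ph[OF I J IJK(1) x(1)] zsec_ph[OF J K IJK(2) x(2)] zsec_ph[OF I K IK xIK] by simp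
  then have "proj K (zsec K (ph J K (ph I J x))) = proj K (zsec K (ph I K x))" by simp
  moreover have "ph J K (ph I J x) \<in> TU K" using ph_in[OF J K _ x(2)] IJK(2) by blast
  moreover have "ph I K x \<in> TU K" using ph_in[OF I K _ xIK] IK by blast
  ultimately have "ph J K (ph I J x) = ph I K x" using proj_zsec[OF K] by simp
  with xIK show ?thesis by blast
qed

lemma ph_comp:
  assumes "I \<in> idx" "J \<in> idx" "K \<in> idx" "I \<subseteq> J" "J \<subseteq> K" "x \<in> UU I J" "ph I J x \<in> UU J K"
  shows "x \<in> UU I K \<and> ph J K (ph I J x) = ph I K x"
proof (cases "I = J \<or> J = K")
  case False
  then show ?thesis using ph_comp_strict assms by blast
qed (use assms in auto)

lemma UU_Int:
  "\<lbrakk>I \<in> idx; J \<in> idx; K \<in> idx; I \<subseteq> J; I \<subseteq> K\<rbrakk> \<Longrightarrow> UU I J \<inter> UU I K = UU I (J \<union> K)"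
  using atlas_tame[unfolded tame_def, THEN conjunct1] by blast

lemma ph_image:
  "\<lbrakk>I \<in> idx; J \<in> idx; K \<in> idx; I \<subseteq> J; J \<subseteq> K\<rbrakk> \<Longrightarrow>
    ph I J ` UU I K = UU J K \<inter> {x \<in> TU J. sec J x \<in> EE I J}"
  using atlas_tame[unfolded tame_def, THEN conjunct2] by blast

lemma EE_closed: "\<lbrakk>J \<in> idx; I \<subseteq> J\<rbrakk> \<Longrightarrow> closedin (ET J) (EE I J)"
  using atlas_filtered[unfolded filtered_def, THEN conjunct1] by blast

lemma EE_empty: "J \<in> idx \<Longrightarrow> EE {} J = zsec J ` TU J"
  using atlas_filtered[unfolded filtered_def, THEN conjunct2, THEN conjunct1] by blast

lemma EE_Int: "\<lbrakk>J \<in> idx; I \<subseteq> J; H \<subseteq> J\<rbrakk> \<Longrightarrow> EE I J \<inter> EE H J = EE (I \<inter> H) J"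
  using atlas_filtered[unfolded filtered_def, THEN conjunct2, THEN conjunct2, THEN conjunct2,
      THEN conjunct1]
  by blast

definition joinable :: "nat set \<Rightarrow> 'u \<Rightarrow> nat set \<Rightarrow> 'u \<Rightarrow> bool" where
  "joinable I x J y \<longleftrightarrow> I \<in> idx \<and> J \<in> idx \<and> x \<in> TU I \<and> y \<in> TU J \<and>
     (\<exists>L\<in>idx. I \<subseteq> L \<and> J \<subseteq> L \<and> x \<in> UU I L \<and> y \<in> UU J L \<and> ph I L x = ph J L y)"

lemma joinableE:
  assumes "joinable I x J y"
  obtains L where "I \<in> idx" "J \<in> idx" "L \<in> idx" "I \<subseteq> L" "J \<subseteq> L" "x \<in> UU I L" "y \<in> UU J L"
    "ph I L x = ph J L y"
  using assms unfolding joinable_def by blast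

lemma joinable_sym:
  assumes "joinable I x J y"
  shows "joinable J y I x"
proof -
  obtain L where "I \<in> idx" "J \<in> idx" "L \<in> idx" "I \<subseteq> L" "J \<subseteq> L" "x \<in> UU I L" "y \<in> UU J L"
    "ph I L x = ph J L y"
    using assms by (rule joinableE)
  moreover have "x \<in> TU I" "y \<in> TU J" using assms unfolding joinable_def by auto
  ultimately show ?thesis unfolding joinable_def by (intro conjI bexI[of _ L]) auto
qed

lemma joinable_gen:
  assumes "((I, x), (J, y)) \<in> kgen A"
  shows "joinable I x J y"
proof -
  have h: "I \<in> idx" "J \<in> idx" "I \<subseteq> J" "x \<in> UU I J" "y = ph I J x"
    using assms unfolding kgen_def by auto
  then have "x \<in> TU I" "y \<in> TU J" using UU_subset[OF h(1-3)] ph_in[OF h(1-4)] by auto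
  then show ?thesis unfolding joinable_def using h by (intro conjI bexI[of _ J]) auto
qed

text \<open>Tameness lets the two common extensions be merged into their union.\<close>

lemma joinable_trans:
  assumes r1: "joinable I x J y" and r2: "joinable J y K z"
  shows "joinable I x K z"
proof -
  obtain L1 where L1: "I \<in> idx" "J \<in> idx" "L1 \<in> idx" "I \<subseteq> L1" "J \<subseteq> L1" "x \<in> UU I L1"
      "y \<in> UU J L1" "ph I L1 x = ph J L1 y"
    using r1 by (rule joinableE)
  obtain L2 where L2: "K \<in> idx" "L2 \<in> idx" "J \<subseteq> L2" "K \<subseteq> L2" "y \<in> UU J L2" "z \<in> UU K L2"
      "ph J L2 y = ph K L2 z"
    using r2 by (rule joinableE) (auto simp: joinable_def)
  let ?L = "L1 \<union> L2"
  have yL: "y \<in> UU J ?L" using UU_Int[OF L1(2,3) L2(2) L1(5) L2(3)] L1(7) L2(5) by blast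
  then have L: "?L \<in> idx" using UU_notin by fastforce
  have move: "v \<in> UU V ?L \<and> ph V ?L v = ph J ?L y"
    if L': "L' \<in> idx" "L' \<subseteq> ?L" "J \<subseteq> L'" "y \<in> UU J L'"
      and v: "V \<in> idx" "V \<subseteq> L'" "v \<in> UU V L'" "ph V L' v = ph J L' y" for V v L'
  proof -
    have w: "ph J L' y \<in> UU L' ?L" using ph_image[OF L1(2) L'(1) L L'(3,2)] yL by blast
    have "ph L' ?L (ph J L' y) = ph J ?L y" using ph_comp[OF L1(2) L'(1) L L'(3,2) L'(4) w] by blast
    moreover have "v \<in> UU V ?L \<and> ph L' ?L (ph V L' v) = ph V ?L v"
      using ph_comp[OF v(1) L'(1) L v(2) L'(2) v(3)] w v(4) by simp
    ultimately show ?thesis using v(4) by simp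
  qed
  have "x \<in> UU I ?L \<and> ph I ?L x = ph J ?L y"
    using move[OF L1(3) _ L1(5) L1(7) L1(1) L1(4) L1(6) L1(8)] by blast
  moreover have "z \<in> UU K ?L \<and> ph K ?L z = ph J ?L y"
    using move[OF L2(2) _ L2(3) L2(5) L2(1) L2(4) L2(6) L2(7)[symmetric]] by blast
  moreover have "I \<subseteq> ?L" "K \<subseteq> ?L" using L1(4) L2(4) by auto
  moreover have "x \<in> TU I" "z \<in> TU K" using r1 r2 unfolding joinable_def by auto
  ultimately show ?thesis unfolding joinable_def
    using L1(1) L2(1) L by (intro conjI bexI[of _ ?L]) auto
qed

lemma kequiv_imp_joinable:
  assumes "((I, x), (J, y)) \<in> kequiv A" "I \<in> idx" "x \<in> TU I"
  shows "joinable I x J y"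
proof -
  have "joinable I x (fst q) (snd q)" if "((I, x), q) \<in> (kgen A \<union> (kgen A)\<inverse>)\<^sup>*" for q
    using that
  proof (induction rule: rtrancl_induct)
    case base
    show ?case using assms(2,3) unfolding joinable_def by (intro conjI bexI[of _ I]) auto
  next
    case (step q r)
    from step.hyps(2) have "joinable (fst q) (snd q) (fst r) (snd r)"
    proof
      assume "(q, r) \<in> kgen A"
      then show ?thesis using joinable_gen by (metis prod.collapse)
    next
      assume "(q, r) \<in> (kgen A)\<inverse>"
      then show ?thesis using joinable_gen joinable_sym by (metis converseD prod.collapse)
    qed
    with step.IH show ?case by (rule joinable_trans)
  qed
  then show ?thesis using assms(1) unfolding kequiv_def by fastforce
qed

lemma ph_image_full:
  "\<lbrakk>I \<in> idx; L \<in> idx; I \<subseteq> L\<rbrakk> \<Longrightarrow> ph I L ` UU I L = {w \<in> TU L. sec L w \<in> EE I L}"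
  using ph_image[of I L L] by auto

lemma joinableE_Int:
  assumes "joinable I x J y"
  obtains L where "I \<in> idx" "J \<in> idx" "L \<in> idx" "I \<subseteq> L" "J \<subseteq> L" "x \<in> UU I L"
    "y \<in> UU J L" "ph I L x = ph J L y" "ph I L x \<in> TU L" "sec L (ph I L x) \<in> EE (I \<inter> J) L"
proof -
  obtain L where L: "I \<in> idx" "J \<in> idx" "L \<in> idx" "I \<subseteq> L" "J \<subseteq> L" "x \<in> UU I L"
      "y \<in> UU J L" "ph I L x = ph J L y"
    using assms by (rule joinableE)
  have "ph I L x \<in> ph I L ` UU I L" using L(6) by (rule imageI)
  moreover have "ph I L x \<in> ph J L ` UU J L" unfolding L(8) using L(7) by (rule imageI)
  ultimately have "ph I L x \<in> TU L" "sec L (ph I L x) \<in> EE I L \<inter> EE J L"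
    unfolding ph_image_full[OF L(1,3,4)] ph_image_full[OF L(2,3,5)] by auto
  with L that show thesis unfolding EE_Int[OF L(3-5)] by blast
qed

lemma joinable_disjoint:
  assumes r: "joinable I x J y" and IJ: "I \<inter> J = {}"
  shows "x \<in> zeros I \<and> y \<in> zeros J \<and> psi I x = psi J y"
proof -
  obtain L where L: "I \<in> idx" "J \<in> idx" "L \<in> idx" "I \<subseteq> L" "J \<subseteq> L" "x \<in> UU I L"
      "y \<in> UU J L" "ph I L x = ph J L y" "ph I L x \<in> TU L" "sec L (ph I L x) \<in> EE (I \<inter> J) L"
    using r by (rule joinableE_Int)
  define w where "w = ph I L x"
  obtain w' where w': "w' \<in> TU L" "sec L w = zsec L w'"
    using L(10) EE_empty[OF L(3)] IJ unfolding w_def by auto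
  have "w = w'" using proj_sec[OF L(3) L(9)] proj_zsec[OF L(3) w'(1)] w'(2) unfolding w_def by simp
  then have "w \<in> zeros L" using L(9) w'(2) unfolding w_def by (simp add: zeroset_def)
  then have "x \<in> zeros I" "y \<in> zeros J"
    using zeros_reflect[OF L(1,3,4,6)] zeros_reflect[OF L(2,3,5,7)] L(8) unfolding w_def by auto
  moreover have "psi L w = psi I x" "psi L w = psi J y"
    using ph_zeros[OF L(1,3,4,6)] ph_zeros[OF L(2,3,5,7)] \<open>x \<in> zeros I\<close> \<open>y \<in> zeros J\<close> L(8)
    unfolding w_def by auto
  ultimately show ?thesis by simp
qed

lemma joinable_Int:
  assumes r: "joinable I x J y" and H: "I \<inter> J \<noteq> {}"
  shows "\<exists>z \<in> UU (I \<inter> J) I \<inter> UU (I \<inter> J) J. x = ph (I \<inter> J) I z \<and> y = ph (I \<inter> J) J z"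
proof -
  obtain L where L: "I \<in> idx" "J \<in> idx" "L \<in> idx" "I \<subseteq> L" "J \<subseteq> L" "x \<in> UU I L"
      "y \<in> UU J L" "ph I L x = ph J L y" "ph I L x \<in> TU L" "sec L (ph I L x) \<in> EE (I \<inter> J) L"
    using r by (rule joinableE_Int)
  define H where "H = I \<inter> J"
  define w where "w = ph I L x"
  have Hidx: "H \<in> idx" using idx_subset[OF L(1) _ H] H_def by blast
  have HL: "H \<subseteq> L" using H_def L(4) by blast
  have "w \<in> ph H L ` UU H L" using ph_image_full[OF Hidx L(3) HL] L(9,10) H_def w_def by simp
  then obtain z where z: "z \<in> UU H L" "w = ph H L z" by blast
  have lift: "z \<in> UU H K \<and> ph H K z = v"
    if K: "K \<in> idx" "H \<subseteq> K" "K \<subseteq> L" and v: "v \<in> UU K L" "w = ph K L v" for K v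
  proof -
    have "K \<union> L = L" using K(3) by blast
    then have zK: "z \<in> UU H K" using UU_Int[OF Hidx K(1) L(3) K(2) HL] z(1) by auto
    have "ph H K z \<in> UU K L" using ph_image[OF Hidx K(1) L(3) K(2,3)] z(1) by blast
    moreover have "ph K L (ph H K z) = ph K L v"
      using ph_comp[OF Hidx K(1) L(3) K(2,3) zK] calculation z(2) v(2) by simp
    ultimately have "ph H K z = v" using ph_inj[OF K(1) L(3) K(3)] v(1) by (simp add: inj_on_def)
    with zK show ?thesis by blast
  qed
  have "z \<in> UU H I \<and> ph H I z = x" using lift[OF L(1) _ L(4,6)] H_def w_def by blast
  moreover have "z \<in> UU H J \<and> ph H J z = y" using lift[OF L(2) _ L(5,7)] H_def w_def L(8) by blast
  ultimately show ?thesis unfolding H_def by blast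
qed

lemma kequiv_zeros:
  assumes I: "I \<in> idx" and J: "J \<in> idx" and x: "x \<in> zeros I" and y: "y \<in> zeros J"
    and eq: "psi I x = psi J y"
  shows "((I, x), (J, y)) \<in> kequiv A"
proof -
  let ?L = "I \<union> J"
  have pI: "psi I x \<in> foot I" using psi_image[OF I] x by blast
  have pJ: "psi I x \<in> foot J" using psi_image[OF J] y eq by force
  have L: "?L \<in> idx" using idx_Un[OF I J pI pJ] .
  have pL: "psi I x \<in> foot ?L"
    using foot_eq_Inter[OF L] foot_eq_Inter[OF I] foot_eq_Inter[OF J] pI pJ by auto
  have inL: "v \<in> UU K ?L" if K: "K \<in> idx" "K \<subseteq> ?L" "v \<in> zeros K" "psi K v = psi I x" for K v
  proof (cases "K = ?L")
    case True
    then show ?thesis using K(1,3) zeros_subset by auto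
  next
    case False
    then have KL: "K \<subset> ?L" using K(2) by blast
    have "psi K v \<in> foot K" using psi_image[OF K(1)] K(3) by blast
    then have "v \<in> {x \<in> zeros K. psi K x \<in> foot K \<inter> foot ?L}" using K(3,4) pL by simp
    then show ?thesis unfolding UU_Int_zeros[OF K(1) L KL, symmetric] by blast
  qed
  have xL: "x \<in> UU I ?L" using inL[OF I _ x refl] by blast
  have yL: "y \<in> UU J ?L" using inL[OF J _ y eq[symmetric]] by blast
  have zx: "ph I ?L x \<in> zeros ?L \<and> psi ?L (ph I ?L x) = psi I x"
    using ph_zeros[OF I L Un_upper1 xL x] .
  have zy: "ph J ?L y \<in> zeros ?L \<and> psi ?L (ph J ?L y) = psi J y"
    using ph_zeros[OF J L Un_upper2 yL y] .
  have "ph I ?L x = ph J ?L y"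
    using inj_onD[OF psi_inj[OF L], of "ph I ?L x" "ph J ?L y"] zx zy eq by simp
  then have "((I, x), (?L, ph I ?L x)) \<in> kgen A" "((?L, ph I ?L x), (J, y)) \<in> (kgen A)\<inverse>"
    unfolding kgen_def using I J L xL yL by blast+
  then show ?thesis unfolding kequiv_def by (meson UnI1 UnI2 r_into_rtrancl rtrancl_trans)
qed

lemma piK_eq_iff: "piK A a = piK A b \<longleftrightarrow> (a, b) \<in> kequiv A"
proof -
  have "equiv UNIV (kequiv A)"
    unfolding kequiv_def equiv_def
    by (simp add: refl_rtrancl sym_rtrancl sym_Un_converse trans_rtrancl)
  then show ?thesis unfolding piK_def by (simp add: eq_equiv_class_iff)
qed

definition related_pairs :: "nat set \<Rightarrow> nat set \<Rightarrow> ('u \<times> 'u) set" where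
  "related_pairs I J = {(x, y). x \<in> TU I \<and> ((I, x), (J, y)) \<in> kequiv A}"

lemma related_pairs_zeros:
  assumes "(x, y) \<in> related_pairs I J" "I \<in> idx" "x \<in> zeros I"
  shows "y \<in> zeros J \<and> psi J y = psi I x"
proof -
  have "joinable I x J y" using assms kequiv_imp_joinable by (auto simp: related_pairs_def)
  then obtain L where L: "I \<in> idx" "J \<in> idx" "L \<in> idx" "I \<subseteq> L" "J \<subseteq> L" "x \<in> UU I L" "y \<in> UU J L"
      "ph I L x = ph J L y"
    by (rule joinableE)
  have w: "ph J L y \<in> zeros L" "psi L (ph J L y) = psi I x"
    using ph_zeros[OF L(1,3,4,6) assms(3)] L(8) by auto
  then have "y \<in> zeros J" using zeros_reflect[OF L(2,3,5,7)] by blast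
  then show ?thesis using ph_zeros[OF L(2,3,5,7)] w(2) by auto
qed

lemma related_pairs_disjoint:
  assumes I: "I \<in> idx" and J: "J \<in> idx" and IJ: "I \<inter> J = {}"
  shows "related_pairs I J = {(a, b). a \<in> zeros I \<and> b \<in> zeros J \<and> psi I a = psi J b}"
proof (intro set_eqI iffI)
  fix p assume "p \<in> related_pairs I J"
  then obtain x y where "p = (x, y)" "x \<in> TU I" "((I, x), (J, y)) \<in> kequiv A"
    by (auto simp: related_pairs_def)
  then show "p \<in> {(a, b). a \<in> zeros I \<and> b \<in> zeros J \<and> psi I a = psi J b}"
    using joinable_disjoint[OF kequiv_imp_joinable[OF _ I] IJ] by auto
next
  fix p assume "p \<in> {(a, b). a \<in> zeros I \<and> b \<in> zeros J \<and> psi I a = psi J b}"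
  then show "p \<in> related_pairs I J"
    using kequiv_zeros[OF I J] zeros_subset by (auto simp: related_pairs_def)
qed

lemma related_pairs_Int:
  assumes I: "I \<in> idx" and J: "J \<in> idx" and IJ: "I \<inter> J \<noteq> {}"
  shows "related_pairs I J =
    {(ph (I \<inter> J) I z, ph (I \<inter> J) J z) | z. z \<in> UU (I \<inter> J) I \<inter> UU (I \<inter> J) J}"
proof (intro set_eqI iffI)
  fix p assume "p \<in> related_pairs I J"
  then obtain x y where "p = (x, y)" "x \<in> TU I" "((I, x), (J, y)) \<in> kequiv A"
    by (auto simp: related_pairs_def)
  then show "p \<in> {(ph (I \<inter> J) I z, ph (I \<inter> J) J z) | z. z \<in> UU (I \<inter> J) I \<inter> UU (I \<inter> J) J}"
    using joinable_Int[OF kequiv_imp_joinable[OF _ I] IJ] by auto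
next
  fix p assume "p \<in> {(ph (I \<inter> J) I z, ph (I \<inter> J) J z) | z. z \<in> UU (I \<inter> J) I \<inter> UU (I \<inter> J) J}"
  then obtain z where p: "p = (ph (I \<inter> J) I z, ph (I \<inter> J) J z)"
      "z \<in> UU (I \<inter> J) I" "z \<in> UU (I \<inter> J) J"
    by blast
  have H: "I \<inter> J \<in> idx" using idx_subset[OF I _ IJ] by blast
  have "((I \<inter> J, z), (I, ph (I \<inter> J) I z)) \<in> kgen A" "((I \<inter> J, z), (J, ph (I \<inter> J) J z)) \<in> kgen A"
    unfolding kgen_def using H I J p(2,3) by blast+
  then have "((I, ph (I \<inter> J) I z), (J, ph (I \<inter> J) J z)) \<in> kequiv A"
    unfolding kequiv_def by (meson UnI1 UnI2 converseI r_into_rtrancl rtrancl_trans)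
  moreover have "ph (I \<inter> J) I z \<in> TU I" using ph_in[OF H I _ p(2)] by blast
  ultimately show "p \<in> related_pairs I J" using p(1) by (simp add: related_pairs_def)
qed

lemma closedin_related_pairs:
  assumes I: "I \<in> idx" and J: "J \<in> idx" and IJ: "\<not> I \<subseteq> J" "\<not> J \<subseteq> I"
  shows "closedin (prod_topology (UT I) (UT J)) (related_pairs I J)"
proof (cases "I \<inter> J = {}")
  case True
  show ?thesis
    unfolding related_pairs_disjoint[OF I J True]
    by (rule closedin_fibre_product[OF Hausdorff_X zeros_closed[OF I] zeros_closed[OF J]
          continuous_psi[OF I] continuous_psi[OF J]])
next
  case False
  define H where "H = I \<inter> J"
  have Hidx: "H \<in> idx" using idx_subset[OF I _ False] H_def by blast
  have HK: "H \<subset> I" "H \<subset> J" using IJ H_def by auto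
  have "closedin (UT K) (ph H K ` UU H K)" if K: "K \<in> idx" "H \<subset> K" for K
  proof -
    have "closedin (UT K) {w \<in> TU K. sec K w \<in> EE H K}"
      using closedin_continuous_map_preimage[OF continuous_sec[OF K(1)] EE_closed[OF K(1)]] K(2)
        by blast
    then show ?thesis using ph_image_full[OF Hidx K(1)] K(2) by auto
  qed
  then show ?thesis
    unfolding related_pairs_Int[OF I J False] H_def[symmetric]
    using closedin_embedding_pairs[OF UT_Hausdorff[OF Hidx] UU_subset[OF Hidx I]
        UU_subset[OF Hidx J]
        ph_embedding[OF Hidx I HK(1)] ph_embedding[OF Hidx J HK(2)]] I J HK by blast
qed

section \<open>Construction of the reduction\<close>

lemma compactin_zeros_preimage:
  assumes I: "I \<in> idx" and D: "compactin X D" "D \<subseteq> foot I"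
  shows "compactin (UT I) {x \<in> zeros I. psi I x \<in> D}"
proof -
  let ?C = "{x \<in> zeros I. psi I x \<in> D}"
  have "psi I ` ?C = D"
  proof
    show "D \<subseteq> psi I ` ?C"
    proof
      fix d assume "d \<in> D"
      then have "d \<in> psi I ` zeros I" using psi_image[OF I] D(2) by blast
      then obtain z where "z \<in> zeros I" "d = psi I z" by (rule imageE)
      with \<open>d \<in> D\<close> show "d \<in> psi I ` ?C" by blast
    qed
  qed auto
  then have "compactin (subtopology X (foot I)) (psi I ` ?C)"
    using D by (simp add: compactin_subtopology)
  moreover have "?C \<subseteq> topspace (subtopology (UT I) (zeros I))" using zeros_subset by auto
  ultimately have "compactin (subtopology (UT I) (zeros I)) ?C"
    using homeomorphic_map_compactness[OF psi_homeomorphic[OF I]] by blast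
  then show ?thesis by (simp add: compactin_subtopology)
qed

lemma piK_img_disjoint:
  assumes "(S \<times> T) \<inter> related_pairs I J = {}" "S \<subseteq> TU I"
  shows "piK_img A I S \<inter> piK_img A J T = {}"
  using assms unfolding piK_img_def by (fastforce simp: piK_eq_iff related_pairs_def)

lemma iotaX_subset_piK_img:
  assumes "\<And>p. p \<in> topspace X \<Longrightarrow> \<exists>I\<in>idx. \<exists>z \<in> V I \<inter> zeros I. psi I z = p"
  shows "iotaX A \<subseteq> (\<Union>I\<in>idx. piK_img A I (V I))"
proof
  fix c assume "c \<in> iotaX A"
  then obtain K x where K: "K \<in> idx" "x \<in> zeros K" "c = piK A (K, x)" unfolding iotaX_def by blast
  then have "psi K x \<in> topspace X"
    using psi_image[OF K(1)] openin_subset[OF openin_foot[OF K(1)]] by blast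
  then obtain I z where I: "I \<in> idx" "z \<in> V I" "z \<in> zeros I" "psi I z = psi K x"
    using assms by blast
  then have "c = piK A (I, z)"
    using kequiv_zeros[OF K(1) I(1) K(2) I(3)] K(3) by (simp add: piK_eq_iff)
  then show "c \<in> (\<Union>I\<in>idx. piK_img A I (V I))" using I(1,2) unfolding piK_img_def by blast
qed

lemma reduction_from_footprint_pieces:
  assumes D: "\<And>I. I \<in> idx \<Longrightarrow> compactin X (D I) \<and> D I \<subseteq> foot I"
    and disj: "\<And>I J. \<lbrakk>I \<in> idx; J \<in> idx; \<not> I \<subseteq> J; \<not> J \<subseteq> I\<rbrakk> \<Longrightarrow> D I \<inter> D J = {}"
    and cov: "topspace X \<subseteq> (\<Union>I\<in>idx. D I)"
  shows "\<exists>V. is_reduction A V"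
proof -
  define C where "C I = {x \<in> zeros I. psi I x \<in> D I}" for I
  obtain V where V: "\<And>I. I \<in> idx \<Longrightarrow> openin (UT I) (V I)" "\<And>I. I \<in> idx \<Longrightarrow> C I \<subseteq> V I"
      "\<And>I. I \<in> idx \<Longrightarrow> compactin (UT I) (UT I closure_of V I)" "\<And>I. C I = {} \<Longrightarrow> V I = {}"
      "\<And>I J. \<lbrakk>I \<in> idx; J \<in> idx; \<not> I \<subseteq> J \<and> \<not> J \<subseteq> I\<rbrakk> \<Longrightarrow>
        ((UT I closure_of V I) \<times> (UT J closure_of V J)) \<inter> related_pairs I J = {}"
  proof (rule compact_families_separated_nbhds[where Y = UT and C = C and M = related_pairs])
    show "compactin (UT I) (C I)" if I: "I \<in> idx" for I
      using compactin_zeros_preimage[OF I] D[OF I] unfolding C_def by blast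
    show "(C I \<times> C J) \<inter> related_pairs I J = {}"
      if IJ: "I \<in> idx" "J \<in> idx" "\<not> I \<subseteq> J \<and> \<not> J \<subseteq> I" for I J
      using related_pairs_zeros[OF _ IJ(1)] disj[OF IJ(1,2)] IJ(3) by (fastforce simp: C_def)
    show "closedin (prod_topology (UT I) (UT J)) (related_pairs I J)"
      if "I \<in> idx" "J \<in> idx" "\<not> I \<subseteq> J \<and> \<not> J \<subseteq> I" for I J
      using closedin_related_pairs that by blast
  qed (rule finite_idx | erule UT_locally_compact | erule UT_Hausdorff | blast)+
  have "is_reduction A V"
    unfolding is_reduction_def
  proof (intro conjI ballI impI)
    show "openin (UT I) (V I)" "compactin (UT I) (UT I closure_of V I)" if "I \<in> idx" for I
      using V(1,3) that by auto
    show "V I \<inter> zeros I \<noteq> {}" if "I \<in> idx" "V I \<noteq> {}" for I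
      using V(2,4) that unfolding C_def by blast
    show "I \<subseteq> J \<or> J \<subseteq> I"
      if "I \<in> idx" "J \<in> idx"
        "piK_img A I (UT I closure_of V I) \<inter> piK_img A J (UT J closure_of V J) \<noteq> {}"
      for I J
      using piK_img_disjoint[OF V(5) closure_of_subset_topspace] that by blast
    show "iotaX A \<subseteq> (\<Union>I\<in>idx. piK_img A I (V I))"
    proof (rule iotaX_subset_piK_img)
      fix p assume "p \<in> topspace X"
      then obtain I where I: "I \<in> idx" "p \<in> D I" using cov by blast
      then have "p \<in> psi I ` zeros I" using D[OF I(1)] psi_image[OF I(1)] by blast
      then obtain z where "z \<in> zeros I" "p = psi I z" by (rule imageE)
      then show "\<exists>I\<in>idx. \<exists>z \<in> V I \<inter> zeros I. psi I z = p" using V(2) I unfolding C_def by blast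
    qed
  qed
  then show ?thesis by blast
qed

lemma exists_footprint_pieces:
  assumes cX: "compact_space X"
  obtains D where "\<And>I. I \<in> idx \<Longrightarrow> compactin X (D I) \<and> D I \<subseteq> foot I"
    "\<And>I J. \<lbrakk>I \<in> idx; J \<in> idx; \<not> I \<subseteq> J; \<not> J \<subseteq> I\<rbrakk> \<Longrightarrow> D I \<inter> D J = {}"
    "topspace X \<subseteq> (\<Union>I\<in>idx. D I)"
proof -
  have op: "openin X (foot {i})" if "i \<in> {1..aN A}" for i
    using atlas_transition[unfolded transition_data_def, THEN conjunct1] that
    by (simp add: is_kchart_def)
  have cov: "topspace X \<subseteq> (\<Union>i\<in>{1..aN A}. foot {i})"
    using atlas_transition[unfolded transition_data_def, THEN conjunct2, THEN conjunct1] by simp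
  obtain D where D: "\<And>I. \<lbrakk>I \<subseteq> {1..aN A}; I \<noteq> {}\<rbrakk> \<Longrightarrow> closedin X (D I) \<and> D I \<subseteq> (\<Inter>i\<in>I. foot {i})"
      "\<And>I J. \<lbrakk>I \<subseteq> {1..aN A}; J \<subseteq> {1..aN A}; \<not> I \<subseteq> J; \<not> J \<subseteq> I\<rbrakk> \<Longrightarrow> D I \<inter> D J = {}"
      "\<And>x. x \<in> topspace X \<Longrightarrow> \<exists>I. I \<noteq> {} \<and> I \<subseteq> {1..aN A} \<and> x \<in> D I"
    using finite_open_cover_incomparable_pieces[OF cX Hausdorff_X finite_atLeastAtMost op cov]
      by blast
  show thesis
  proof
    fix I assume I: "I \<in> idx"
    then have "closedin X (D I) \<and> D I \<subseteq> (\<Inter>i\<in>I. foot {i})" using D(1) by (simp add: idx_iff)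
    then show "compactin X (D I) \<and> D I \<subseteq> foot I"
      using closedin_compact_space[OF cX] foot_eq_Inter[OF I] by simp
  next
    show "D I \<inter> D J = {}" if "I \<in> idx" "J \<in> idx" "\<not> I \<subseteq> J" "\<not> J \<subseteq> I" for I J
      using D(2) that by (simp add: idx_iff)
  next
    show "topspace X \<subseteq> (\<Union>I\<in>idx. D I)"
    proof
      fix x assume "x \<in> topspace X"
      then obtain I where I: "I \<noteq> {}" "I \<subseteq> {1..aN A}" "x \<in> D I" using D(3) by blast
      then have "x \<in> (\<Inter>i\<in>I. foot {i})" using D(1) by blast
      with I have "I \<in> idx" unfolding idx_iff by blast
      with I(3) show "x \<in> (\<Union>I\<in>idx. D I)" by blast
    qed
  qed
qed

end

theorem mainTheorem16:
  fixes X :: "'x topology" and A :: "('x, 'u, 'e) katlas"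
  assumes "compact_space X" and "metrizable_space X"
    and "tame_kur_atlas X A"
  shows "\<exists>V. is_reduction A V"
proof -
  interpret tame_kuranishi_atlas X A
    using assms(2,3) metrizable_imp_Hausdorff_space by unfold_locales
  show ?thesis
    by (rule exists_footprint_pieces[OF assms(1)]) (rule reduction_from_footprint_pieces)
qed

end
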